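(* Let $P^A,P^B,S$ be pairwise disjoint infinite sets of positive integers, each with a fixed enumeration, and for real $x\ge0$ let $P^c_x$ (resp. $S_x$) denote the first $\lfloor x\rfloor$ elements of $P^c$ (resp. $S$). For $c\in\{A,B\}$ and integers $0<k\le t$ define $F^c_{t,k}=P^c_{t/2+1}\cup(S_{t/2}\setminus S_{t-k})$. Then $\{F^c_{t,k}\}$ is an F-system, and for every positive integer $t$, $\left|\bigcup_{c\in\{A,B\}}\bigcup_{0<\kappa\le\tau\le t}F^c_{\tau,\kappa}\right|\le 1.5\,t+2$; in particular it is a $1.5$-competitive F-system.
   Context: F-system: a family $\mathcal F=\{F^c_{t,k}\}$ of sets of positive integers, indexed by $c\in\{A,B\}$ and integers $0<k\le t$, such that (F1) $|F^c_{t,k}|\ge k$ for all $c,t,k$; and (F2) $F^A_{t,k}\cap F^B_{t',k'}=\emptyset$ for all $k\le t$, $k'\le t'$ with $k+k'\le\max(t,t')$. An F-system is $R$-competitive if there is a constant $\lambda$ (independent of $t$) such that for every positive integer $t$, $\left|\bigcup_{c\in\{A,B\}}\bigcup_{0<\kappa\le\tau\le t}F^c_{\tau,\kappa}\right|\le Rt+\lambda$. *)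

theory Defs
  imports Complex_Main
begin

datatype color = A | B

text \<open>A family F c t k of sets of positive integers (only indices 0 < k <= t matter).\<close>
definition F_system :: "(color \<Rightarrow> nat \<Rightarrow> nat \<Rightarrow> nat set) \<Rightarrow> bool" where
  "F_system F \<longleftrightarrow>
     (\<forall>c t k. 0 < k \<and> k \<le> t \<longrightarrow> (\<forall>x\<in>F c t k. 0 < x)) \<and>
     (\<forall>c t k. 0 < k \<and> k \<le> t \<longrightarrow> (infinite (F c t k) \<or> k \<le> card (F c t k))) \<and>
     (\<forall>t k t' k'. 0 < k \<and> k \<le> t \<and> 0 < k' \<and> k' \<le> t' \<and> k + k' \<le> max t t'
        \<longrightarrow> F A t k \<inter> F B t' k' = {})"

definition F_union :: "(color \<Rightarrow> nat \<Rightarrow> nat \<Rightarrow> nat set) \<Rightarrow> nat \<Rightarrow> nat set" where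
  "F_union F t = (\<Union>c\<in>UNIV. \<Union>\<tau>\<in>{1..t}. \<Union>\<kappa>\<in>{1..\<tau>}. F c \<tau> \<kappa>)"

definition competitive :: "real \<Rightarrow> (color \<Rightarrow> nat \<Rightarrow> nat \<Rightarrow> nat set) \<Rightarrow> bool" where
  "competitive R F \<longleftrightarrow> F_system F \<and>
     (\<exists>lam::real. \<forall>t::nat. 0 < t \<longrightarrow>
        finite (F_union F t) \<and> real (card (F_union F t)) \<le> R * real t + lam)"

definition first_elems :: "(nat \<Rightarrow> nat) \<Rightarrow> real \<Rightarrow> nat set" where
  "first_elems e x = e ` {..<nat \<lfloor>x\<rfloor>}"

definition Fcons :: "(color \<Rightarrow> nat \<Rightarrow> nat) \<Rightarrow> (nat \<Rightarrow> nat) \<Rightarrow> color \<Rightarrow> nat \<Rightarrow> nat \<Rightarrow> nat set" where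
  "Fcons P S c t k = first_elems (P c) (real t / 2 + 1) \<union>
      (first_elems S (real t / 2) - first_elems S (real t - real k))"

end

theory Submission
  imports Defs
begin

text \<open>
  Since all arguments of the floors are multiples of one half,
  F(c,t,k) is the image of P c on the index set [0, t div 2] together with the
  image of S on the index window [t - k, t div 2).  Hence:
  \<^item> (F1) the two parts are disjoint and the enumerations are injective, so
    card F(c,t,k) = (t div 2 + 1) + (t div 2 - (t - k)), which is at least k;
  \<^item> (F2) P A, P B and S have disjoint ranges, so F(A,t,k) and F(B,t',k') can only
    meet inside S, and the two S-windows are disjoint whenever k + k' <= max t t';
  \<^item> every F(c,tau,kappa) with tau <= t lies in the first t div 2 + 1 elements of
    P A and P B and the first t div 2 elements of S, so the union has at most
    3 (t div 2) + 2 <= 1.5 t + 2 elements.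
  The file first computes the explicit form of the sets, then proves the
  F-system property and the size bound, and finally assembles the theorem.
\<close>

lemma first_elems_of_nat: "first_elems e (real n) = e ` {..<n}"
  by (simp add: first_elems_def)

lemma nat_floor_half: "nat \<lfloor>real t / 2\<rfloor> = t div 2"
proof -
  have "\<lfloor>real t / real (2::nat)\<rfloor> = int (t div 2)" by (rule floor_divide_of_nat_eq)
  then show ?thesis by simp
qed

lemma first_elems_half: "first_elems e (real t / 2) = e ` {..<t div 2}"
  by (simp add: first_elems_def nat_floor_half)

lemma first_elems_half_plus_one: "first_elems e (real t / 2 + 1) = e ` {..<t div 2 + 1}"
proof -
  have "\<lfloor>real t / 2 + 1\<rfloor> = \<lfloor>real t / 2\<rfloor> + 1" by simp
  then have "nat \<lfloor>real t / 2 + 1\<rfloor> = t div 2 + 1" using nat_floor_half[of t] by linarith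
  then show ?thesis by (simp add: first_elems_def)
qed

lemma Fcons_eq:
  assumes "inj S" and "k \<le> t"
  shows "Fcons P S c t k = P c ` {..<t div 2 + 1} \<union> S ` {t - k..<t div 2}"
proof -
  have "real t - real k = real (t - k)" using assms(2) by simp
  then have "first_elems S (real t - real k) = S ` {..<t - k}"
    by (simp only: first_elems_of_nat)
  moreover have "S ` {..<t div 2} - S ` {..<t - k} = S ` ({..<t div 2} - {..<t - k})"
    by (rule image_set_diff[OF assms(1), symmetric])
  moreover have "{..<t div 2} - {..<t - k} = {t - k..<t div 2}" by auto
  ultimately show ?thesis
    by (simp add: Fcons_def first_elems_half first_elems_half_plus_one)
qed

lemma card_Fcons:
  assumes "inj (P c)" and "inj S" and "range (P c) \<inter> range S = {}" and "k \<le> t"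
  shows "card (Fcons P S c t k) = (t div 2 + 1) + (t div 2 - (t - k))"
proof -
  have "P c ` {..<t div 2 + 1} \<inter> S ` {t - k..<t div 2} = {}" using assms(3) by blast
  then have "card (Fcons P S c t k) = card (P c ` {..<t div 2 + 1}) + card (S ` {t - k..<t div 2})"
    unfolding Fcons_eq[OF assms(2,4)] by (simp add: card_Un_disjoint)
  also have "\<dots> = (t div 2 + 1) + (t div 2 - (t - k))"
    by (simp add: card_image inj_on_subset[OF assms(1)] inj_on_subset[OF assms(2)])
  finally show ?thesis .
qed

lemma card_Fcons_ge:
  assumes "inj (P c)" and "inj S" and "range (P c) \<inter> range S = {}" and "k \<le> t"
  shows "k \<le> card (Fcons P S c t k)"
proof -
  have "k \<le> (t div 2 + 1) + (t div 2 - (t - k))" using assms(4) by presburger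
  then show ?thesis using card_Fcons[of P c S k t] assms by simp
qed

text \<open>The index windows of S used by two sets with k + k' <= max t t' do not overlap:
  the later window starts where the earlier one has already ended.\<close>
lemma windows_disjoint:
  fixes t k t' k' :: nat
  assumes "k \<le> t" and "k' \<le> t'" and "k + k' \<le> max t t'"
  shows "{t - k..<t div 2} \<inter> {t' - k'..<t' div 2} = {}"
proof -
  have False if "t - k \<le> x" "x < t div 2" "t' - k' \<le> x" "x < t' div 2" for x
    using assms that by (simp add: max_def split: if_splits; presburger)
  then show ?thesis by fastforce
qed

text \<open>(F2): an A-set and a B-set can only meet inside S, where their windows are disjoint.\<close>
lemma Fcons_disjoint:
  assumes "inj S" and "range (P A) \<inter> range (P B) = {}" and "\<And>c. range (P c) \<inter> range S = {}"
    and "k \<le> t" and "k' \<le> t'" and "k + k' \<le> max t t'"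
  shows "Fcons P S A t k \<inter> Fcons P S B t' k' = {}"
proof -
  have "S ` {t - k..<t div 2} \<inter> S ` {t' - k'..<t' div 2} = {}"
    using windows_disjoint[OF assms(4-6)] image_Int[OF assms(1), symmetric] by (metis image_empty)
  moreover have "P A ` X \<inter> P B ` Y = {}" "P c ` X \<inter> S ` Y = {}" "S ` Y \<inter> P c ` X = {}"
    for c X Y using assms(2) assms(3)[of c] by blast+
  ultimately show ?thesis
    unfolding Fcons_eq[OF assms(1,4)] Fcons_eq[OF assms(1,5)] Int_Un_distrib Int_Un_distrib2
    by simp
qed

lemma F_system_Fcons:
  assumes "\<And>c. inj (P c)" and "inj S"
    and "\<And>c n. 0 < P c n" and "\<And>n. 0 < S n"
    and "range (P A) \<inter> range (P B) = {}"
    and "\<And>c. range (P c) \<inter> range S = {}"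
  shows "F_system (Fcons P S)"
  unfolding F_system_def
proof (intro conjI allI impI)
  fix c and t k :: nat assume tk: "0 < k \<and> k \<le> t"
  then have "Fcons P S c t k = P c ` {..<t div 2 + 1} \<union> S ` {t - k..<t div 2}"
    using Fcons_eq[OF assms(2)] by blast
  then show "\<forall>x\<in>Fcons P S c t k. 0 < x" using assms(3,4) by auto
  show "infinite (Fcons P S c t k) \<or> k \<le> card (Fcons P S c t k)"
    using card_Fcons_ge[OF assms(1,2,6)] tk by simp
next
  fix t k t' k' :: nat assume "0 < k \<and> k \<le> t \<and> 0 < k' \<and> k' \<le> t' \<and> k + k' \<le> max t t'"
  then show "Fcons P S A t k \<inter> Fcons P S B t' k' = {}"
    by (intro Fcons_disjoint[OF assms(2,5,6)]) simp_all
qed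

lemma F_union_Fcons_subset:
  assumes "inj S"
  shows "F_union (Fcons P S) t \<subseteq> P A ` {..<t div 2 + 1} \<union> P B ` {..<t div 2 + 1} \<union> S ` {..<t div 2}"
proof
  fix x assume "x \<in> F_union (Fcons P S) t"
  then obtain c \<tau> \<kappa> where "\<tau> \<le> t" "\<kappa> \<le> \<tau>" "x \<in> Fcons P S c \<tau> \<kappa>"
    unfolding F_union_def by auto
  moreover have "\<tau> div 2 \<le> t div 2" using \<open>\<tau> \<le> t\<close> by (rule div_le_mono)
  ultimately show "x \<in> P A ` {..<t div 2 + 1} \<union> P B ` {..<t div 2 + 1} \<union> S ` {..<t div 2}"
    using Fcons_eq[OF assms] by (cases c) auto
qed

lemma card_F_union_Fcons:
  assumes "inj S"
  shows "finite (F_union (Fcons P S) t) \<and> real (card (F_union (Fcons P S) t)) \<le> 1.5 * real t + 2"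
proof
  let ?U = "P A ` {..<t div 2 + 1} \<union> P B ` {..<t div 2 + 1} \<union> S ` {..<t div 2}"
  have "finite ?U" by simp
  then show "finite (F_union (Fcons P S) t)"
    using F_union_Fcons_subset[OF assms] by (rule finite_subset[rotated])
  have "card (F_union (Fcons P S) t) \<le> card ?U"
    using F_union_Fcons_subset[OF assms] \<open>finite ?U\<close> by (rule card_mono[rotated])
  also have "\<dots> \<le> card (P A ` {..<t div 2 + 1}) + card (P B ` {..<t div 2 + 1}) + card (S ` {..<t div 2})"
    by (meson add_le_mono card_Un_le le_trans order_refl)
  also have "\<dots> \<le> (t div 2 + 1) + (t div 2 + 1) + t div 2"
    by (intro add_le_mono) (metis card_image_le card_lessThan finite_lessThan)+
  finally have "card (F_union (Fcons P S) t) \<le> 3 * (t div 2) + 2" by simp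
  moreover have "2 * (3 * (t div 2)) \<le> 3 * t" by simp
  ultimately show "real (card (F_union (Fcons P S) t)) \<le> 1.5 * real t + 2"
    by linarith
qed

theorem mainTheorem3:
  fixes P :: "color \<Rightarrow> nat \<Rightarrow> nat" and S :: "nat \<Rightarrow> nat"
  assumes "\<And>c. inj (P c)" and "inj S"
    and "\<And>c n. 0 < P c n" and "\<And>n. 0 < S n"
    and "range (P A) \<inter> range (P B) = {}"
    and "\<And>c. range (P c) \<inter> range S = {}"
  shows "F_system (Fcons P S)
    \<and> (\<forall>t::nat. 0 < t \<longrightarrow> real (card (F_union (Fcons P S) t)) \<le> 1.5 * real t + 2)
    \<and> competitive 1.5 (Fcons P S)"
proof -
  have system: "F_system (Fcons P S)" using F_system_Fcons[OF assms] .
  note bound = card_F_union_Fcons[OF assms(2)]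
  have "competitive 1.5 (Fcons P S)"
    unfolding competitive_def using system bound by blast
  then show ?thesis using system bound by blast
qed

end
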